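(* Let $R_s>0$ and $\lambda=2^{R_s}$. Let $\gamma_d,\gamma_e$ be independent random variables, where for $t\in\{d,e\}$, $\gamma_t$ follows the generalized-$K$ distribution with parameters $m_t>0$, $k_t>0$ and mean $\overline\gamma_t>0$, i.e. its CDF is $$F_{\gamma_t}(x)=\frac{1}{\Gamma(k_t)\Gamma(m_t)}\,G_{1,3}^{2,1}\!\left(\frac{k_t m_t x}{\overline\gamma_t}\,\middle|\,{1 \atop k_t,\,m_t,\,0}\right),\quad x\ge 0.$$ Let $\sigma_e^2$ denote the variance of $\gamma_e$, let $P(x)=F_{\gamma_d}(\lambda-1+\lambda x)$, and define the second-order approximation of the secrecy outage probability $P_{\rm sop}=\mathbb{E}\{F_{\gamma_d}(\lambda-1+\lambda\gamma_e)\}$ by $$\widetilde P_{\rm sop}:=P(\overline\gamma_e)+\frac{\sigma_e^2}{2}P''(\overline\gamma_e).$$ Then $$\widetilde P_{\rm sop}=\frac{G_{1,3}^{2,1}\!\left(\frac{k_d m_d(\lambda-1+\lambda\overline\gamma_e)}{\overline\gamma_d}\,\middle|\,{1\atop k_d,\,m_d,\,0}\right)}{\Gamma(k_d)\Gamma(m_d)}+\overline\gamma_e^2\lambda^2\,\frac{\left(\frac{(k_e+1)(m_e+1)}{k_em_e}-1\right)G_{2,4}^{2,2}\!\left(\frac{k_dm_d(\lambda-1+\lambda\overline\gamma_e)}{\overline\gamma_d}\,\middle|\,{0,\,1\atop k_d,\,m_d,\,0,\,2}\right)}{2\Gamma(k_d)\Gamma(m_d)(\lambda-1+\lambda\overl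ine\gamma_e)^2}.$$
   Context: $G^{m,n}_{p,q}\left(z\,\middle|\,{a_1,\dots,a_p\atop b_1,\dots,b_q}\right)$ denotes the standard Meijer G-function with upper parameters $a_i$ and lower parameters $b_j$; $\Gamma$ is the Gamma function. The generalized-$K$ distribution with parameters $k,m$ and mean $\overline\gamma$ is that of $\overline\gamma XY$ with $X,Y$ independent Gamma variables of shapes $k$ and $m$ and unit means. $P''$ denotes the second derivative of $P$. *)

theory Defs
  imports "HOL-Probability.Probability"
begin

text \<open>Meijer G-function G^{m,n}_{p,q}(z | a; b) for real parameters a (length p), b (length q)
  and real z > 0, defined by the Mellin--Barnes integral
  (1/(2 pi i)) * integral over L of
     prod_{j<m} Gamma(b_j - s) * prod_{j<n} Gamma(1 - a_j + s)
   / (prod_{m<=j<q} Gamma(1 - b_j + s) * prod_{n<=j<p} Gamma(a_j - s)) * z^s ds,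
  where L is the vertical line Re s = c separating the poles of the Gamma(b_j - s), j<m,
  from those of the Gamma(1 - a_j + s), j<n.  We take c to be the midpoint between
  max_{j<n} (a_j - 1) and min_{j<m} b_j (this is the standard vertical-line contour,
  which is valid whenever that max is below that min; the value does not depend on the
  choice of c in that strip).  With s = c + i t, ds = i dt.\<close>

definition meijer_contour :: "nat \<Rightarrow> nat \<Rightarrow> real list \<Rightarrow> real list \<Rightarrow> real" where
  "meijer_contour m n a b =
     (let lo = (if n = 0 then None else Some (Max ((\<lambda>j. a ! j - 1) ` {..<n})));
          hi = (if m = 0 then None else Some (Min ((\<lambda>j. b ! j) ` {..<m})))
      in case (lo, hi) of
           (Some l, Some h) \<Rightarrow> (l + h) / 2
         | (Some l, None) \<Rightarrow> l + 1
         | (None, Some h) \<Rightarrow> h - 1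
         | (None, None) \<Rightarrow> 0)"

definition meijer_integrand ::
  "nat \<Rightarrow> nat \<Rightarrow> real list \<Rightarrow> real list \<Rightarrow> real \<Rightarrow> complex \<Rightarrow> complex" where
  "meijer_integrand m n a b z s =
     (\<Prod>j<m. Gamma (complex_of_real (b ! j) - s)) *
     (\<Prod>j<n. Gamma (1 - complex_of_real (a ! j) + s)) *
     (\<Prod>j\<in>{m..<length b}. rGamma (1 - complex_of_real (b ! j) + s)) *
     (\<Prod>j\<in>{n..<length a}. rGamma (complex_of_real (a ! j) - s)) *
     (complex_of_real z) powr s"

definition meijerG :: "nat \<Rightarrow> nat \<Rightarrow> real list \<Rightarrow> real list \<Rightarrow> real \<Rightarrow> real" where
  "meijerG m n a b z =
     Re ((LINT t|lborel. meijer_integrand m n a b z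
            (Complex (meijer_contour m n a b) t)) / complex_of_real (2 * pi))"

text \<open>Gamma density with shape k and unit mean (rate k).\<close>
definition gamma_density :: "real \<Rightarrow> real \<Rightarrow> real" where
  "gamma_density k x =
     (if 0 < x then k powr k * x powr (k - 1) * exp (- k * x) / Gamma k else 0)"

definition genK_cdf :: "real \<Rightarrow> real \<Rightarrow> real \<Rightarrow> real \<Rightarrow> real" where
  "genK_cdf k m gbar x =
     meijerG 2 1 [1] [k, m, 0] (k * m * x / gbar) / (Gamma k * Gamma m)"

end

(*
  On the common line Re s = c, c = min k m / 2, both Meijer G-functions are Mellin-Barnes
  integrals, with kernels Gamma(k - s) Gamma(m - s) / s for G^{2,1}_{1,3} and
  (s - 1) Gamma(k - s) Gamma(m - s) for G^{2,2}_{2,4}.  Differentiating z^s under the integral sign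
  multiplies the kernel by s and lowers the exponent by one, so two differentiations give
  (G^{2,1}_{1,3})''(z) = G^{2,2}_{2,4}(z) / z^2; dominated convergence is justified by the
  polynomial decay of Gamma along vertical lines.  The affine argument lam - 1 + lam x of the CDF
  contributes the factor lam^2.  Finally gamma_e = gbar_e X Y with independent unit-mean Gamma
  variables, and E X^2 = (k + 1) / k gives the variance gbar_e^2 ((k_e+1)(m_e+1)/(k_e m_e) - 1).
*)
theory Submission
  imports Defs "HOL-Probability.Sinc_Integral"
begin

lemma one_plus_square_pos: "0 < 1 + (t::real)\<^sup>2"
  by (simp add: add_pos_nonneg)

lemma norm_Complex_le: "norm (Complex c t) \<le> (\<bar>c\<bar> + 1) * (1 + t\<^sup>2)"
proof -
  have "\<bar>t\<bar> \<le> 1 + t\<^sup>2"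
    using zero_le_power2[of "\<bar>t\<bar> - 1"] unfolding power2_diff power2_abs by simp
  moreover have "0 \<le> \<bar>c\<bar> * t\<^sup>2" by simp
  moreover have "(\<bar>c\<bar> + 1) * (1 + t\<^sup>2) = \<bar>c\<bar> + \<bar>c\<bar> * t\<^sup>2 + 1 + t\<^sup>2"
    by (simp add: algebra_simps)
  ultimately have "\<bar>c\<bar> + \<bar>t\<bar> \<le> (\<bar>c\<bar> + 1) * (1 + t\<^sup>2)"
    by linarith
  then show ?thesis
    using cmod_le[of "Complex c t"] by simp
qed

lemma continuous_on_Complex: "continuous_on UNIV (Complex c)"
  by (simp add: Complex_eq) (intro continuous_intros)

lemma powr_le_add_powr_endpoints:
  fixes a b y p :: real
  assumes "0 < a" "y \<in> {a..b}"
  shows "y powr p \<le> a powr p + b powr p"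
proof (cases "p \<ge> 0")
  case True
  then have "y powr p \<le> b powr p" using assms by (intro powr_mono2) auto
  then show ?thesis by (simp add: add_increasing)
next
  case False
  then have "y powr p \<le> a powr p" using assms by (intro powr_mono2') auto
  then show ?thesis by (simp add: add_increasing2)
qed

lemma of_real_powr_eq_exp: "0 < y \<Longrightarrow> complex_of_real y powr w = exp (w * of_real (ln y))"
  by (simp add: powr_def Ln_of_real)

lemma continuous_on_of_real_powr_Complex:
  "0 < y \<Longrightarrow> continuous_on UNIV (\<lambda>t. complex_of_real y powr (Complex c t - w))"
  by (simp add: of_real_powr_eq_exp Complex_eq) (intro continuous_intros)

lemma integrable_inverse_1_plus_square_lborel:
  "integrable lborel (\<lambda>t::real. C * inverse (1 + t\<^sup>2))"
  using integrable_inverse_1_plus_square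
  by (intro integrable_mult_right) (simp add: set_integrable_def einterval_def)

section \<open>Differentiation under the integral sign\<close>

lemma vector_differentiable_bound:
  fixes f :: "real \<Rightarrow> 'a::real_normed_vector"
  assumes "convex S" and "\<And>y. y \<in> S \<Longrightarrow> (f has_vector_derivative f' y) (at y)"
    and "\<And>y. y \<in> S \<Longrightarrow> norm (f' y) \<le> B" and "x \<in> S" "y \<in> S"
  shows "norm (f y - f x) \<le> B * \<bar>y - x\<bar>"
proof -
  have "norm (f y - f x) \<le> B * norm (y - x)"
  proof (rule differentiable_bound[OF \<open>convex S\<close>])
    show "(f has_derivative (\<lambda>u. u *\<^sub>R f' z)) (at z within S)" if "z \<in> S" for z
      using assms(2)[OF that] by (simp add: has_vector_derivative_def has_derivative_at_withinI)
    show "onorm (\<lambda>u. u *\<^sub>R f' z) \<le> B" if "z \<in> S" for z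
      using assms(3)[OF that] by (simp add: onorm_scaleR_left[OF bounded_linear_ident] onorm_id)
  qed (use assms in auto)
  then show ?thesis by simp
qed

lemma has_vector_derivative_iff_tendsto_quotient:
  "(f has_vector_derivative D) (at x) \<longleftrightarrow> ((\<lambda>y. (f y - f x) /\<^sub>R (y - x)) \<longlongrightarrow> D) (at x)"
proof -
  have quotient: "norm ((f y - f x) /\<^sub>R (y - x) - D) = norm (f y - f x - (y - x) *\<^sub>R D) / norm (y - x)"
    if "y \<noteq> x" for y
  proof -
    have "(f y - f x) /\<^sub>R (y - x) - D = (f y - f x - (y - x) *\<^sub>R D) /\<^sub>R (y - x)"
      using that by (simp add: scaleR_diff_right)
    then show ?thesis by (simp add: divide_inverse ac_simps)
  qed
  have "((\<lambda>y. (f y - f x) /\<^sub>R (y - x)) \<longlongrightarrow> D) (at x) \<longleftrightarrow>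
      ((\<lambda>y. norm ((f y - f x) /\<^sub>R (y - x) - D)) \<longlongrightarrow> 0) (at x)"
    by (simp add: tendsto_norm_zero_iff LIM_zero_iff)
  also have "\<dots> \<longleftrightarrow> ((\<lambda>y. norm (f y - f x - (y - x) *\<^sub>R D) / norm (y - x)) \<longlongrightarrow> 0) (at x)"
    by (intro tendsto_cong) (auto simp: eventually_at_filter quotient)
  finally show ?thesis
    by (simp add: has_vector_derivative_def has_derivative_iff_norm bounded_linear_scaleR_left)
qed

lemma has_vector_derivative_integral:
  fixes f f' :: "real \<Rightarrow> 'a \<Rightarrow> 'b::{banach, second_countable_topology}"
  assumes S: "open S" "convex S" "x \<in> S"
    and integrable_f: "\<And>y. y \<in> S \<Longrightarrow> integrable M (f y)"
    and measurable_f': "f' x \<in> borel_measurable M"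
    and deriv: "\<And>y t. y \<in> S \<Longrightarrow> ((\<lambda>y. f y t) has_vector_derivative f' y t) (at y)"
    and bound: "\<And>y t. y \<in> S \<Longrightarrow> norm (f' y t) \<le> h t"
    and integrable_h: "integrable M h"
  shows "((\<lambda>y. LINT t|M. f y t) has_vector_derivative (LINT t|M. f' x t)) (at x)"
proof -
  define q where "q y t = (f y t - f x t) /\<^sub>R (y - x)" for y t
  have q_bound: "norm (q y t) \<le> h t" if "y \<in> S" "y \<noteq> x" for y t
  proof -
    have "norm (f y t - f x t) \<le> h t * \<bar>y - x\<bar>"
      using vector_differentiable_bound[OF S(2) deriv bound S(3) \<open>y \<in> S\<close>] by blast
    then show ?thesis
      using that by (simp add: q_def divide_simps)
  qed
  have q_lim: "((\<lambda>y. q y t) \<longlongrightarrow> f' x t) (at x)" for t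
    using deriv[OF S(3)] unfolding q_def has_vector_derivative_iff_tendsto_quotient .
  have q_integral: "(LINT t|M. q y t) = ((LINT t|M. f y t) - (LINT t|M. f x t)) /\<^sub>R (y - x)"
    if "y \<in> S" for y
    using integrable_f[OF that] integrable_f[OF S(3)] by (simp add: q_def)
  have "((\<lambda>y. LINT t|M. q y t) \<longlongrightarrow> (LINT t|M. f' x t)) (at x within S)"
    unfolding tendsto_at_iff_sequentially comp_def
  proof (intro allI impI)
    fix X assume X: "\<forall>i. X i \<in> S - {x}" "X \<longlonglongrightarrow> x"
    then have "filterlim X (at x) sequentially"
      by (intro filterlim_atI) auto
    then have "AE t in M. (\<lambda>i. q (X i) t) \<longlonglongrightarrow> f' x t"
      by (intro AE_I2 filterlim_compose[OF q_lim])
    moreover have "q (X i) \<in> borel_measurable M" for i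
      unfolding q_def using X(1) integrable_f S(3)
      by (intro borel_measurable_integrable integrable_scaleR_right integrable_diff) auto
    moreover have "AE t in M. norm (q (X i) t) \<le> h t" for i
      using X(1) q_bound by simp
    ultimately show "(\<lambda>i. LINT t|M. q (X i) t) \<longlonglongrightarrow> (LINT t|M. f' x t)"
      by (intro integral_dominated_convergence[OF measurable_f' _ integrable_h])
  qed
  then have "((\<lambda>y. ((LINT t|M. f y t) - (LINT t|M. f x t)) /\<^sub>R (y - x)) \<longlongrightarrow> (LINT t|M. f' x t))
      (at x within S)"
    by (rule tendsto_cong[THEN iffD1, rotated]) (auto simp: eventually_at_filter q_integral)
  then show ?thesis
    unfolding has_vector_derivative_iff_tendsto_quotient at_within_open[OF S(3,1)] .
qed

section \<open>Mellin-Barnes integrals\<close>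

definition mellin_barnes :: "(complex \<Rightarrow> complex) \<Rightarrow> real \<Rightarrow> real \<Rightarrow> real" where
  "mellin_barnes \<phi> c z = Re (LINT t|lborel. \<phi> (Complex c t) * of_real z powr Complex c t) / (2 * pi)"

lemma meijerG_eq_mellin_barnes:
  "meijerG m n a b = mellin_barnes (meijer_integrand m n a b 1) (meijer_contour m n a b)"
proof
  fix z
  have "meijer_integrand m n a b z s = meijer_integrand m n a b 1 s * of_real z powr s" for s
    unfolding meijer_integrand_def by (simp only: of_real_1 powr_one_eq_one mult_1_right)
  then show "meijerG m n a b z = mellin_barnes (meijer_integrand m n a b 1) (meijer_contour m n a b) z"
    by (simp add: meijerG_def mellin_barnes_def)
qed

lemma mellin_barnes_cong:
  "(\<And>t. \<phi> (Complex c t) = \<psi> (Complex c t)) \<Longrightarrow> mellin_barnes \<phi> c = mellin_barnes \<psi> c"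
  by (simp add: fun_eq_iff mellin_barnes_def)

lemma mellin_barnes_shift:
  assumes "0 < z"
  shows "mellin_barnes \<phi> (c - a) z = mellin_barnes (\<lambda>s. \<phi> (s - of_real a)) c z / z powr a"
proof -
  define L where "L = complex_of_real (ln z)"
  have shift: "Complex (c - a) t = Complex c t - of_real a" for t
    by (simp add: complex_eq_iff)
  have "complex_of_real (z powr a) = exp (of_real a * L)"
    using assms by (simp add: L_def powr_def flip: exp_of_real)
  then have "of_real z powr Complex (c - a) t = of_real z powr Complex c t / of_real (z powr a)" for t
    using assms by (simp add: of_real_powr_eq_exp shift left_diff_distrib exp_diff flip: L_def)
  then show ?thesis
    by (simp add: mellin_barnes_def shift)
qed

lemma mult_one_plus_square_le:
  fixes x B t :: real
  assumes "x \<le> B / (1 + t\<^sup>2)\<^sup>2"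
  shows "x * (1 + t\<^sup>2) \<le> B * inverse (1 + t\<^sup>2)"
proof -
  have "x * (1 + t\<^sup>2) \<le> B / (1 + t\<^sup>2)\<^sup>2 * (1 + t\<^sup>2)"
    by (rule mult_right_mono[OF assms]) simp
  also have "\<dots> = B * inverse (1 + t\<^sup>2)"
    using one_plus_square_pos[of t] by (simp add: power2_eq_square[of "1 + t\<^sup>2"] divide_inverse)
  finally show ?thesis .
qed

lemma integrable_mellin_barnes_integrand:
  assumes cont: "continuous_on UNIV (\<lambda>t. \<phi> (Complex c t))"
    and bound: "\<And>t. norm (\<phi> (Complex c t)) \<le> B / (1 + t\<^sup>2)\<^sup>2"
    and "0 < y"
  shows "integrable lborel (\<lambda>t. \<phi> (Complex c t) * of_real y powr Complex c t)"
proof (rule Bochner_Integration.integrable_bound)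
  show "integrable lborel (\<lambda>t. y powr c * B * inverse (1 + t\<^sup>2))"
    by (rule integrable_inverse_1_plus_square_lborel)
  have "continuous_on UNIV (\<lambda>t. \<phi> (Complex c t) * of_real y powr Complex c t)"
    using continuous_on_of_real_powr_Complex[OF \<open>0 < y\<close>, of c 0] by (intro continuous_on_mult cont) simp
  then show "(\<lambda>t. \<phi> (Complex c t) * of_real y powr Complex c t) \<in> borel_measurable lborel"
    by (simp add: borel_measurable_continuous_onI)
  have "0 \<le> B"
    using order_trans[OF norm_ge_zero bound[of 0]] by simp
  have "norm (\<phi> (Complex c t) * of_real y powr Complex c t) \<le> y powr c * (B * inverse (1 + t\<^sup>2))" for t
  proof -
    have "norm (\<phi> (Complex c t) * of_real y powr Complex c t) = y powr c * norm (\<phi> (Complex c t))"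
      using \<open>0 < y\<close> by (simp add: norm_mult norm_powr_real_powr)
    also have "norm (\<phi> (Complex c t)) \<le> norm (\<phi> (Complex c t)) * (1 + t\<^sup>2)"
      by (simp add: mult_le_cancel_left1)
    finally show ?thesis
      using mult_one_plus_square_le[OF bound[of t]] by (simp add: mult_left_mono order_trans)
  qed
  then show "AE t in lborel. norm (\<phi> (Complex c t) * of_real y powr Complex c t)
      \<le> norm (y powr c * B * inverse (1 + t\<^sup>2))"
    using \<open>0 \<le> B\<close> by (intro AE_I2) (simp add: abs_mult mult.assoc)
qed

lemma norm_mellin_barnes_derivative_integrand_le:
  assumes bound: "norm (\<phi> (Complex c t)) \<le> B / (1 + t\<^sup>2)\<^sup>2"
    and "0 < a" "y \<in> {a..b}"
  shows "norm (\<phi> (Complex c t) * (Complex c t * of_real y powr (Complex c t - 1)))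
    \<le> (\<bar>c\<bar> + 1) * (a powr (c - 1) + b powr (c - 1)) * B * inverse (1 + t\<^sup>2)"
proof -
  define K where "K = a powr (c - 1) + b powr (c - 1)"
  have "0 < y"
    using assms(2,3) by simp
  have "y powr (c - 1) \<le> K"
    unfolding K_def using assms(2,3) by (rule powr_le_add_powr_endpoints)
  then have "norm (Complex c t) * y powr (c - 1) \<le> (\<bar>c\<bar> + 1) * (1 + t\<^sup>2) * K"
    using norm_Complex_le[of c t] by (intro mult_mono) auto
  then have "norm (\<phi> (Complex c t) * (Complex c t * of_real y powr (Complex c t - 1)))
      \<le> norm (\<phi> (Complex c t)) * ((\<bar>c\<bar> + 1) * (1 + t\<^sup>2) * K)"
    using \<open>0 < y\<close> by (simp add: norm_mult norm_powr_real_powr mult_left_mono)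
  also have "\<dots> = (\<bar>c\<bar> + 1) * K * (norm (\<phi> (Complex c t)) * (1 + t\<^sup>2))"
    by (simp add: mult_ac)
  also have "\<dots> \<le> (\<bar>c\<bar> + 1) * K * (B * inverse (1 + t\<^sup>2))"
    using mult_one_plus_square_le[OF bound] by (intro mult_left_mono) (auto simp: K_def)
  finally show ?thesis
    by (simp add: K_def mult.assoc)
qed

text \<open>Differentiating \<open>z powr s\<close> produces \<open>s * z powr (s - 1)\<close>; substituting \<open>s + 1\<close> for \<open>s\<close>
  moves the line of integration to \<open>Re s = c - 1\<close>.  The quadratic decay of \<open>\<phi>\<close> pays for the
  factor \<open>s\<close> in the dominated convergence argument.\<close>

lemma has_real_derivative_mellin_barnes:
  assumes cont: "continuous_on UNIV (\<lambda>t. \<phi> (Complex c t))"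
    and bound: "\<And>t. norm (\<phi> (Complex c t)) \<le> B / (1 + t\<^sup>2)\<^sup>2"
    and "0 < z"
  shows "(mellin_barnes \<phi> c has_real_derivative
            mellin_barnes (\<lambda>s. (s + 1) * \<phi> (s + 1)) (c - 1) z) (at z)"
proof -
  define S where "S = {z/2<..<2*z}"
  define f where "f = (\<lambda>y t. \<phi> (Complex c t) * of_real y powr Complex c t)"
  define f' where "f' = (\<lambda>y t. \<phi> (Complex c t) * (Complex c t * of_real y powr (Complex c t - 1)))"
  have S: "open S" "convex S" "z \<in> S" and S_pos: "\<And>y. y \<in> S \<Longrightarrow> 0 < y"
    using \<open>0 < z\<close> by (auto simp: S_def)
  have deriv: "((\<lambda>y. f y t) has_vector_derivative f' y t) (at y)" if "y \<in> S" for y t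
  proof -
    have "complex_of_real y \<notin> \<real>\<^sub>\<le>\<^sub>0"
      using S_pos[OF that] by (auto simp: nonpos_Reals_def)
    then show ?thesis
      unfolding f_def f'_def
      by (intro has_vector_derivative_mult_right has_vector_derivative_real_field
          has_field_derivative_powr)
  qed
  have "((\<lambda>y. LINT t|lborel. f y t) has_vector_derivative (LINT t|lborel. f' z t)) (at z)"
  proof (rule has_vector_derivative_integral[OF S _ _ deriv,
        where h = "\<lambda>t. (\<bar>c\<bar> + 1) * ((z/2) powr (c - 1) + (2*z) powr (c - 1)) * B * inverse (1 + t\<^sup>2)"])
    show "integrable lborel (f y)" if "y \<in> S" for y
      unfolding f_def using S_pos[OF that] by (rule integrable_mellin_barnes_integrand[OF cont bound])
    have "continuous_on UNIV (f' z)"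
      unfolding f'_def using \<open>0 < z\<close>
      by (intro continuous_on_mult cont continuous_on_Complex continuous_on_of_real_powr_Complex)
    then show "f' z \<in> borel_measurable lborel"
      by (simp add: borel_measurable_continuous_onI)
    show "norm (f' y t) \<le> (\<bar>c\<bar> + 1) * ((z/2) powr (c - 1) + (2*z) powr (c - 1)) * B * inverse (1 + t\<^sup>2)"
      if "y \<in> S" for y t
      unfolding f'_def using that \<open>0 < z\<close>
      by (intro norm_mellin_barnes_derivative_integrand_le[where \<phi> = \<phi>, OF bound]) (auto simp: S_def)
  qed (assumption | rule integrable_inverse_1_plus_square_lborel)+
  then have "(mellin_barnes \<phi> c has_real_derivative Re (LINT t|lborel. f' z t) / (2 * pi)) (at z)"
    unfolding mellin_barnes_def f_def by (intro DERIV_cdivide has_field_derivative_Re)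
  moreover have "f' z t = (Complex (c - 1) t + 1) * \<phi> (Complex (c - 1) t + 1) *
      of_real z powr Complex (c - 1) t" for t
  proof -
    have "Complex (c - 1) t + 1 = Complex c t" "Complex c t - 1 = Complex (c - 1) t"
      by (simp_all add: complex_eq_iff)
    then show ?thesis
      by (simp add: f'_def mult_ac)
  qed
  ultimately show ?thesis
    by (simp add: mellin_barnes_def)
qed

section \<open>The Gamma function on vertical lines\<close>

lemma not_nonpos_Int_if_Re_pos: "0 < Re z \<Longrightarrow> z \<notin> \<int>\<^sub>\<le>\<^sub>0"
  by (auto elim!: nonpos_Ints_cases)

lemma Gamma_mult_rGamma: "z \<notin> \<int>\<^sub>\<le>\<^sub>0 \<Longrightarrow> Gamma z * rGamma z = 1"
  by (simp add: rGamma_inverse_Gamma Gamma_nonzero)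

lemma norm_Gamma_le_Gamma_Re:
  fixes z :: complex
  assumes "0 < Re z"
  shows "norm (Gamma z) \<le> Gamma (Re z)"
proof -
  have "norm (Gamma_series z n) \<le> Gamma_series (Re z) n" for n
  proof -
    have le: "pochhammer (Re z) (n + 1) \<le> norm (pochhammer z (n + 1))"
      unfolding pochhammer_prod prod_norm[symmetric]
    proof (rule prod_mono)
      fix i assume "i \<in> {0..<n + 1}"
      show "0 \<le> Re z + of_nat i \<and> Re z + of_nat i \<le> norm (z + of_nat i)"
        using assms complex_Re_le_cmod[of "z + of_nat i"] by simp
    qed
    have pos: "0 < pochhammer (Re z) (n + 1)"
      using assms by (intro pochhammer_pos)
    have "norm (Gamma_series z n) =
        fact n * exp (Re z * ln (of_nat n)) / norm (pochhammer z (n + 1))"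
      unfolding Gamma_series_def norm_divide norm_mult by (simp add: norm_exp_eq_Re norm_fact)
    also have "\<dots> \<le> fact n * exp (Re z * ln (of_nat n)) / pochhammer (Re z) (n + 1)"
      using pos le by (intro divide_left_mono mult_pos_pos) auto
    also have "\<dots> = Gamma_series (Re z) n"
      by (simp add: Gamma_series_def)
    finally show ?thesis .
  qed
  then show ?thesis
    by (intro LIMSEQ_le[OF tendsto_norm[OF Gamma_series_LIMSEQ] Gamma_series_LIMSEQ]) auto
qed

lemma norm_Gamma_mult_power_le:
  fixes z :: complex
  assumes "0 < Re z"
  shows "norm (Gamma z) * norm z ^ N \<le> Gamma (Re z + of_nat N)"
proof -
  have "norm z ^ N \<le> (\<Prod>i<N. norm (z + of_nat i))"
  proof -
    have "norm z \<le> norm (z + of_nat i)" for i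
    proof -
      have "(Re z)\<^sup>2 \<le> (Re z + of_nat i)\<^sup>2"
        using assms by (intro power_mono) auto
      then have "norm z ^ 2 \<le> norm (z + of_nat i) ^ 2"
        by (simp add: cmod_power2)
      then show ?thesis
        by (rule power2_le_imp_le) simp
    qed
    then show ?thesis
      using prod_mono[of "{..<N}" "\<lambda>_. norm z" "\<lambda>i. norm (z + of_nat i)"] by simp
  qed
  also have "\<dots> = norm (pochhammer z N)"
    by (simp add: pochhammer_prod prod_norm atLeast0LessThan)
  finally have "norm (Gamma z) * norm z ^ N \<le> norm (Gamma z * pochhammer z N)"
    by (simp add: norm_mult mult_left_mono)
  also have "Gamma z * pochhammer z N = Gamma (z + of_nat N)"
    using pochhammer_Gamma[OF not_nonpos_Int_if_Re_pos[OF assms], of N]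
      Gamma_nonzero[OF not_nonpos_Int_if_Re_pos[OF assms]]
    by simp
  also have "norm (Gamma (z + of_nat N)) \<le> Gamma (Re z + of_nat N)"
    using assms by (intro order_trans[OF norm_Gamma_le_Gamma_Re]) auto
  finally show ?thesis .
qed

lemma norm_Gamma_le_decay:
  fixes z :: complex
  assumes "0 < Re z"
  shows "norm (Gamma z) \<le> Gamma (Re z + 4) / (min ((Re z)\<^sup>2) 1)\<^sup>2 / (1 + (Im z)\<^sup>2)\<^sup>2"
proof -
  define q where "q = min ((Re z)\<^sup>2) 1 * (1 + (Im z)\<^sup>2)"
  have "0 < q"
    using assms by (simp add: q_def one_plus_square_pos)
  have "q \<le> (Re z)\<^sup>2 + min ((Re z)\<^sup>2) 1 * (Im z)\<^sup>2"
    by (simp add: q_def algebra_simps)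
  also have "\<dots> \<le> norm z ^ 2"
    using mult_right_mono[of "min ((Re z)\<^sup>2) 1" 1 "(Im z)\<^sup>2"] by (simp add: cmod_power2)
  finally have "q\<^sup>2 \<le> norm z ^ 4"
    using power_mono[of q "norm z ^ 2" 2] \<open>0 < q\<close> by (simp add: power_mult[symmetric])
  then have "norm (Gamma z) * q\<^sup>2 \<le> norm (Gamma z) * norm z ^ 4"
    by (intro mult_left_mono) auto
  also have "\<dots> \<le> Gamma (Re z + 4)"
    using norm_Gamma_mult_power_le[OF assms, of 4] by simp
  finally have "norm (Gamma z) \<le> Gamma (Re z + 4) / q\<^sup>2"
    using \<open>0 < q\<close> by (simp add: pos_le_divide_eq)
  then show ?thesis
    by (simp add: q_def power_mult_distrib divide_divide_eq_left)
qed

lemma continuous_on_Gamma_pair_line: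
  assumes "c < k" "c < m"
  shows "continuous_on UNIV (\<lambda>t. Gamma (of_real k - Complex c t) * Gamma (of_real m - Complex c t))"
proof (rule continuous_at_imp_continuous_on, intro ballI)
  fix t
  have "isCont (Complex c) t"
    using continuous_on_Complex[of c] by (simp add: continuous_on_eq_continuous_at)
  moreover have "of_real k - Complex c t \<notin> \<int>\<^sub>\<le>\<^sub>0" "of_real m - Complex c t \<notin> \<int>\<^sub>\<le>\<^sub>0"
    using assms by (simp_all add: not_nonpos_Int_if_Re_pos)
  ultimately show "isCont (\<lambda>t. Gamma (of_real k - Complex c t) * Gamma (of_real m - Complex c t)) t"
    by (intro continuous_intros) auto
qed

lemma norm_Gamma_pair_line_le:
  assumes "c < k" "c < m"
  shows "norm (Gamma (of_real k - Complex c t) * Gamma (of_real m - Complex c t))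
    \<le> Gamma (k - c) * Gamma (m - c + 4) / (min ((m - c)\<^sup>2) 1)\<^sup>2 / (1 + t\<^sup>2)\<^sup>2"
proof -
  have "norm (Gamma (of_real k - Complex c t)) \<le> Gamma (k - c)"
    using norm_Gamma_le_Gamma_Re[of "of_real k - Complex c t"] assms by simp
  moreover have "norm (Gamma (of_real m - Complex c t))
      \<le> Gamma (m - c + 4) / (min ((m - c)\<^sup>2) 1)\<^sup>2 / (1 + t\<^sup>2)\<^sup>2"
    using norm_Gamma_le_decay[of "of_real m - Complex c t"] assms by simp
  ultimately have "norm (Gamma (of_real k - Complex c t)) * norm (Gamma (of_real m - Complex c t))
      \<le> Gamma (k - c) * (Gamma (m - c + 4) / (min ((m - c)\<^sup>2) 1)\<^sup>2 / (1 + t\<^sup>2)\<^sup>2)"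
    using assms by (intro mult_mono) (auto intro: less_imp_le)
  then show ?thesis
    by (simp add: norm_mult)
qed

section \<open>The second derivative of the generalized-K CDF\<close>

lemma meijer_integrand_2_1_one:
  assumes "0 < Re s"
  shows "meijer_integrand 2 1 [1] [k, m, 0] 1 s = Gamma (of_real k - s) * Gamma (of_real m - s) / s"
proof -
  have "s \<noteq> 0"
    using assms by auto
  then have "rGamma (s + 1) = rGamma s / s"
    using rGamma_plus1[of s] by (simp add: eq_divide_eq mult.commute)
  then have "Gamma s * rGamma (s + 1) = 1 / s"
    using Gamma_mult_rGamma[OF not_nonpos_Int_if_Re_pos[OF assms]] by simp
  then show ?thesis
    by (simp add: meijer_integrand_def lessThan_Suc numeral_2_eq_2 numeral_3_eq_3
        atLeastLessThanSuc add.commute mult.assoc)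
qed

lemma meijer_integrand_2_2_one:
  assumes "0 < Re s"
  shows "meijer_integrand 2 2 [0, 1] [k, m, 0, 2] 1 s =
    (s - 1) * Gamma (of_real k - s) * Gamma (of_real m - s)"
proof -
  have "rGamma (s - 1) = (s - 1) * rGamma s"
    using rGamma_plus1[of "s - 1"] by simp
  then have "Gamma s * rGamma (s - 1) = (s - 1) * (Gamma s * rGamma s)"
    by (simp add: mult_ac)
  then have "Gamma s * rGamma (s - 1) = s - 1"
    using Gamma_mult_rGamma[OF not_nonpos_Int_if_Re_pos[OF assms]] by simp
  moreover have "Gamma (s + 1) * rGamma (s + 1) = 1"
    using assms by (intro Gamma_mult_rGamma not_nonpos_Int_if_Re_pos) simp
  moreover have "meijer_integrand 2 2 [0, 1] [k, m, 0, 2] 1 s =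
      Gamma (of_real k - s) * Gamma (of_real m - s) *
      ((Gamma s * rGamma (s - 1)) * (Gamma (s + 1) * rGamma (s + 1)))"
    by (simp add: meijer_integrand_def lessThan_Suc numeral_2_eq_2 numeral_3_eq_3
        eval_nat_numeral atLeastLessThanSuc add.commute mult_ac)
  ultimately show ?thesis
    by (simp add: mult_ac)
qed

lemma meijer_contour_2_1: "meijer_contour 2 1 [1] [k, m, 0] = min k m / 2"
  by (simp add: meijer_contour_def lessThan_Suc numeral_2_eq_2 min_def)

lemma meijer_contour_2_2: "meijer_contour 2 2 [0, 1] [k, m, 0, 2] = min k m / 2"
  by (simp add: meijer_contour_def lessThan_Suc numeral_2_eq_2 min_def max_def)

lemma meijerG_2_1_eq_mellin_barnes:
  assumes "0 < k" "0 < m"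
  shows "meijerG 2 1 [1] [k, m, 0] =
    mellin_barnes (\<lambda>s. Gamma (of_real k - s) * Gamma (of_real m - s) / s) (min k m / 2)"
  unfolding meijerG_eq_mellin_barnes meijer_contour_2_1
  using assms meijer_integrand_2_1_one[of "Complex (min k m / 2) _" k m]
  by (intro mellin_barnes_cong) simp

lemma meijerG_2_2_eq_mellin_barnes:
  assumes "0 < k" "0 < m"
  shows "meijerG 2 2 [0, 1] [k, m, 0, 2] =
    mellin_barnes (\<lambda>s. (s - 1) * (Gamma (of_real k - s) * Gamma (of_real m - s))) (min k m / 2)"
  unfolding meijerG_eq_mellin_barnes meijer_contour_2_2
  using assms meijer_integrand_2_2_one[of "Complex (min k m / 2) _" k m]
  by (intro mellin_barnes_cong) (simp add: mult.assoc)

lemma norm_divide_Complex_le: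
  assumes "0 < c"
  shows "norm (w / Complex c t) \<le> norm w / c"
proof -
  have "c \<le> norm (Complex c t)"
    using complex_Re_le_cmod[of "Complex c t"] by simp
  then show ?thesis
    unfolding norm_divide using assms by (intro divide_left_mono mult_pos_pos) auto
qed

lemma meijerG_2_1_second_derivative:
  assumes "0 < k" "0 < m"
  obtains G' where "\<And>z. 0 < z \<Longrightarrow> (meijerG 2 1 [1] [k, m, 0] has_real_derivative G' z) (at z)"
    and "\<And>z. 0 < z \<Longrightarrow> (G' has_real_derivative meijerG 2 2 [0, 1] [k, m, 0, 2] z / z\<^sup>2) (at z)"
proof -
  define c where "c = min k m / 2"
  have c: "0 < c" "c < k" "c < m"
    using assms by (auto simp: c_def)
  define \<Gamma>\<^sub>2 :: "complex \<Rightarrow> complex"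
    where "\<Gamma>\<^sub>2 s = Gamma (of_real k - s) * Gamma (of_real m - s)" for s
  define B where "B = Gamma (k - c) * Gamma (m - c + 4) / (min ((m - c)\<^sup>2) 1)\<^sup>2"
  have cont: "continuous_on UNIV (\<lambda>t. \<Gamma>\<^sub>2 (Complex c t))"
    using continuous_on_Gamma_pair_line[OF c(2,3)] by (simp add: \<Gamma>\<^sub>2_def)
  have bound: "norm (\<Gamma>\<^sub>2 (Complex c t)) \<le> B / (1 + t\<^sup>2)\<^sup>2" for t
    using norm_Gamma_pair_line_le[OF c(2,3)] by (simp add: \<Gamma>\<^sub>2_def B_def)
  have line_shift: "Complex (c - 1) t + 1 = Complex c t" for t
    by (simp add: complex_eq_iff)
  have line_nonzero: "Complex c t \<noteq> 0" for t
    using c(1) by (simp add: complex_eq_iff)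
  define G' where "G' = mellin_barnes (\<lambda>s. \<Gamma>\<^sub>2 (s + 1)) (c - 1)"
  show thesis
  proof
    fix z :: real assume "0 < z"
    have "norm (\<Gamma>\<^sub>2 (Complex c t) / Complex c t) \<le> B / c / (1 + t\<^sup>2)\<^sup>2" for t
      using order_trans[OF norm_divide_Complex_le[OF c(1)] divide_right_mono[OF bound]] c(1)
      by (simp add: field_simps)
    moreover have "continuous_on UNIV (\<lambda>t. \<Gamma>\<^sub>2 (Complex c t) / Complex c t)"
      using line_nonzero by (intro continuous_on_divide cont continuous_on_Complex) auto
    ultimately have "(mellin_barnes (\<lambda>s. \<Gamma>\<^sub>2 s / s) c has_real_derivative
        mellin_barnes (\<lambda>s. (s + 1) * (\<Gamma>\<^sub>2 (s + 1) / (s + 1))) (c - 1) z) (at z)"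
      using \<open>0 < z\<close> by (intro has_real_derivative_mellin_barnes)
    also have "mellin_barnes (\<lambda>s. (s + 1) * (\<Gamma>\<^sub>2 (s + 1) / (s + 1))) (c - 1) = G'"
      unfolding G'_def by (intro mellin_barnes_cong) (simp add: line_shift line_nonzero)
    finally show "(meijerG 2 1 [1] [k, m, 0] has_real_derivative G' z) (at z)"
      unfolding meijerG_2_1_eq_mellin_barnes[OF assms] c_def[symmetric] \<Gamma>\<^sub>2_def .
  next
    fix z :: real assume "0 < z"
    have "(G' has_real_derivative
        mellin_barnes (\<lambda>s. (s + 1) * \<Gamma>\<^sub>2 (s + 1 + 1)) (c - 1 - 1) z) (at z)"
      unfolding G'_def using cont bound \<open>0 < z\<close>
      by (intro has_real_derivative_mellin_barnes) (simp_all add: line_shift)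
    also have "mellin_barnes (\<lambda>s. (s + 1) * \<Gamma>\<^sub>2 (s + 1 + 1)) (c - 1 - 1) z =
        mellin_barnes (\<lambda>s. (s - 1) * \<Gamma>\<^sub>2 s) c z / z\<^sup>2"
      using mellin_barnes_shift[OF \<open>0 < z\<close>, of "\<lambda>s. (s + 1) * \<Gamma>\<^sub>2 (s + 1 + 1)" c 2] \<open>0 < z\<close>
      by (simp add: powr_numeral algebra_simps)
    finally show "(G' has_real_derivative meijerG 2 2 [0, 1] [k, m, 0, 2] z / z\<^sup>2) (at z)"
      unfolding meijerG_2_2_eq_mellin_barnes[OF assms] c_def[symmetric] \<Gamma>\<^sub>2_def .
  qed
qed

lemma deriv_deriv_compose_affine:
  fixes f f' g :: "real \<Rightarrow> real"
  assumes "open U" "g x \<in> U"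
    and f: "\<And>y. y \<in> U \<Longrightarrow> (f has_real_derivative f' y) (at y)"
    and f': "(f' has_real_derivative f'') (at (g x))"
    and g: "\<And>y. (g has_real_derivative a) (at y)"
  shows "deriv (deriv (\<lambda>y. f (g y))) x = a\<^sup>2 * f''"
proof -
  have "open (g -` U)"
    using \<open>open U\<close> DERIV_isCont[OF g] by (rule continuous_open_vimage)
  then have "\<forall>\<^sub>F y in nhds x. g y \<in> U"
    using eventually_nhds_in_open \<open>g x \<in> U\<close> by fastforce
  then have ev: "\<forall>\<^sub>F y in nhds x. deriv (\<lambda>y. f (g y)) y = f' (g y) * a"
    by eventually_elim (intro DERIV_imp_deriv DERIV_chain2[OF f g])
  have "((\<lambda>y. f' (g y) * a) has_real_derivative f'' * a * a) (at x)"
    by (intro DERIV_cmult_right DERIV_chain2[OF f' g])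
  then have "(deriv (\<lambda>y. f (g y)) has_real_derivative f'' * a * a) (at x)"
    by (rule DERIV_cong_ev[OF refl ev refl, THEN iffD2])
  then show ?thesis
    by (simp add: DERIV_imp_deriv power2_eq_square)
qed

lemma deriv_deriv_genK_cdf_affine:
  assumes "0 < k" "0 < m" "0 < gbar" "0 < b + lam * x"
  shows "deriv (deriv (\<lambda>x. genK_cdf k m gbar (b + lam * x))) x =
    lam\<^sup>2 * meijerG 2 2 [0, 1] [k, m, 0, 2] (k * m * (b + lam * x) / gbar)
      / (Gamma k * Gamma m * (b + lam * x)\<^sup>2)"
proof -
  define A where "A y = k * m * (b + lam * y) / gbar" for y
  define GG where "GG = Gamma k * Gamma m"
  have "0 < A x"
    using assms by (simp add: A_def)
  obtain G' where G': "\<And>z. 0 < z \<Longrightarrow> (meijerG 2 1 [1] [k, m, 0] has_real_derivative G' z) (at z)"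
    and G'': "\<And>z. 0 < z \<Longrightarrow> (G' has_real_derivative meijerG 2 2 [0, 1] [k, m, 0, 2] z / z\<^sup>2) (at z)"
    using meijerG_2_1_second_derivative[OF assms(1,2)] by blast
  have "deriv (deriv (\<lambda>y. meijerG 2 1 [1] [k, m, 0] (A y) / GG)) x =
      (k * m * lam / gbar)\<^sup>2 * (meijerG 2 2 [0, 1] [k, m, 0, 2] (A x) / (A x)\<^sup>2 / GG)"
  proof (rule deriv_deriv_compose_affine[where U = "{0<..}" and g = A
        and f = "\<lambda>y. meijerG 2 1 [1] [k, m, 0] y / GG" and f' = "\<lambda>y. G' y / GG"])
    show "((\<lambda>y. meijerG 2 1 [1] [k, m, 0] y / GG) has_real_derivative G' y / GG) (at y)"
      if "y \<in> {0<..}" for y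
      using that by (intro DERIV_cdivide G') simp
    show "((\<lambda>y. G' y / GG) has_real_derivative
        meijerG 2 2 [0, 1] [k, m, 0, 2] (A x) / (A x)\<^sup>2 / GG) (at (A x))"
      using \<open>0 < A x\<close> by (intro DERIV_cdivide G'')
    show "(A has_real_derivative k * m * lam / gbar) (at y)" for y
      unfolding A_def using assms(3) by (auto intro!: derivative_eq_intros)
  qed (use \<open>0 < A x\<close> in auto)
  also have "\<dots> = lam\<^sup>2 * meijerG 2 2 [0, 1] [k, m, 0, 2] (A x) / (GG * (b + lam * x)\<^sup>2)"
  proof -
    have scale: "(k * m * lam / gbar)\<^sup>2 * (X / (k * m * u / gbar)\<^sup>2 / GG) = lam\<^sup>2 * X / (GG * u\<^sup>2)"
      if "0 < u" for X u
      using assms(1-3) that by (simp add: field_simps)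
    show ?thesis
      unfolding A_def by (rule scale[OF assms(4)])
  qed
  finally show ?thesis
    by (simp add: genK_cdf_def A_def GG_def mult.assoc)
qed

section \<open>Moments of the Gamma distribution\<close>

lemma borel_measurable_gamma_density [measurable]: "gamma_density k \<in> borel_measurable borel"
  unfolding gamma_density_def by measurable

lemma gamma_density_mult_power:
  fixes k x :: real and p :: nat
  assumes "0 < k"
  shows "gamma_density k x * x ^ p =
    k / (Gamma k * k ^ p) * (indicator {0..} (k * x) * (k * x) powr (k + real p - 1) / exp (k * x))"
proof (cases "0 < x")
  case True
  have "(k * x) powr (k + real p - 1) = k powr k * k ^ p / k * (x powr (k - 1) * x ^ p)"
    using True assms by (simp add: powr_mult powr_add powr_diff powr_realpow field_simps)
  then show ?thesis
    using True assms by (simp add: gamma_density_def exp_minus field_simps)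
next
  case False
  then show ?thesis
    using assms by (auto simp: gamma_density_def indicator_def zero_le_mult_iff)
qed

lemma nn_integral_gamma_density_power:
  fixes k :: real and p :: nat
  assumes "0 < k"
  shows "(\<integral>\<^sup>+x. ennreal (gamma_density k x * x ^ p) \<partial>lborel) = ennreal (Gamma (k + p) / (Gamma k * k ^ p))"
proof -
  define h where "h u = indicator {0..} u * u powr (k + real p - 1) / exp u" for u :: real
  have [measurable]: "h \<in> borel_measurable borel"
    unfolding h_def by measurable
  define Y where "Y = (\<integral>\<^sup>+x. ennreal (h (k * x)) \<partial>lborel)"
  have "ennreal (Gamma (k + p)) = (\<integral>\<^sup>+u. ennreal (h u) \<partial>lborel)"
    using Gamma_conv_nn_integral_real[of "k + p"] assms unfolding h_def by simp
  also have "\<dots> = ennreal k * Y"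
    using nn_integral_real_affine[of "\<lambda>u. ennreal (h u)" k 0] assms by (simp add: Y_def)
  finally have Gamma_eq: "ennreal (Gamma (k + p)) = ennreal k * Y" .
  have "ennreal (Gamma (k + p) / k) = ennreal (Gamma (k + p)) * ennreal (1 / k)"
    using assms by (simp add: ennreal_mult'[symmetric])
  also have "\<dots> = Y * (ennreal k * ennreal (1 / k))"
    unfolding Gamma_eq by (simp add: mult_ac)
  also have "ennreal k * ennreal (1 / k) = 1"
    using assms by (simp add: ennreal_mult'[symmetric])
  finally have "(\<integral>\<^sup>+x. ennreal (h (k * x)) \<partial>lborel) = ennreal (Gamma (k + p) / k)"
    by (simp add: Y_def)
  then have "(\<integral>\<^sup>+x. ennreal (k / (Gamma k * k ^ p)) * ennreal (h (k * x)) \<partial>lborel)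
      = ennreal (k / (Gamma k * k ^ p)) * ennreal (Gamma (k + p) / k)"
    by (subst nn_integral_cmult) auto
  also have "\<dots> = ennreal (Gamma (k + p) / (Gamma k * k ^ p))"
    using assms by (simp add: ennreal_mult'[symmetric])
  also have "(\<integral>\<^sup>+x. ennreal (k / (Gamma k * k ^ p)) * ennreal (h (k * x)) \<partial>lborel)
      = (\<integral>\<^sup>+x. ennreal (gamma_density k x * x ^ p) \<partial>lborel)"
    using assms
    by (intro nn_integral_cong) (simp add: gamma_density_mult_power h_def ennreal_mult'[symmetric])
  finally show ?thesis .
qed

lemma (in prob_space) gamma_distributed_moment:
  fixes p :: nat
  assumes "0 < k" and X: "distributed M lborel X (\<lambda>x. ennreal (gamma_density k x))"
  shows "integrable M (\<lambda>\<omega>. X \<omega> ^ p)"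
    and "expectation (\<lambda>\<omega>. X \<omega> ^ p) = Gamma (k + p) / (Gamma k * k ^ p)"
proof -
  have nonneg: "0 \<le> gamma_density k x" for x
    using assms(1) by (simp add: gamma_density_def)
  have AE_nonneg: "AE x in lborel. 0 \<le> gamma_density k x * x ^ p"
    using assms(1) by (intro AE_I2) (simp add: gamma_density_def)
  then have "integrable lborel (\<lambda>x. gamma_density k x * x ^ p)"
    by (intro integrableI_nonneg) (auto simp: nn_integral_gamma_density_power[OF assms(1)])
  then show "integrable M (\<lambda>\<omega>. X \<omega> ^ p)"
    using distributed_integrable[OF X, of "\<lambda>x. x ^ p"] nonneg by simp
  have "(LINT x|lborel. gamma_density k x * x ^ p) = Gamma (k + p) / (Gamma k * k ^ p)"
    using AE_nonneg assms(1)
    by (subst integral_eq_nn_integral) (auto simp: nn_integral_gamma_density_power)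
  then show "expectation (\<lambda>\<omega>. X \<omega> ^ p) = Gamma (k + p) / (Gamma k * k ^ p)"
    using distributed_integral[OF X, of "\<lambda>x. x ^ p"] nonneg by simp
qed

lemma (in prob_space) gamma_distributed_mean_second_moment:
  assumes "0 < k" and X: "distributed M lborel X (\<lambda>x. ennreal (gamma_density k x))"
  shows "integrable M X" "expectation X = 1"
    "integrable M (\<lambda>\<omega>. (X \<omega>)\<^sup>2)" "expectation (\<lambda>\<omega>. (X \<omega>)\<^sup>2) = (k + 1) / k"
proof -
  have Gamma_Suc: "Gamma (x + 1) = x * Gamma x" if "0 < x" for x :: real
    using that by (intro Gamma_plus1) (auto elim!: nonpos_Ints_cases)
  have "Gamma k \<noteq> 0"
    using assms(1) by (simp add: less_imp_neq[symmetric])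
  have "Gamma (k + 2) = (k + 1) * k * Gamma k"
    using Gamma_Suc[of "k + 1"] Gamma_Suc[of k] assms(1) by (simp add: add.assoc)
  then show "expectation (\<lambda>\<omega>. (X \<omega>)\<^sup>2) = (k + 1) / k"
    using gamma_distributed_moment(2)[OF assms, of 2] \<open>Gamma k \<noteq> 0\<close> assms(1)
    by (simp add: power2_eq_square)
  show "expectation X = 1"
    using gamma_distributed_moment(2)[OF assms, of 1] Gamma_Suc[OF assms(1)] \<open>Gamma k \<noteq> 0\<close> assms(1)
    by simp
  show "integrable M X" "integrable M (\<lambda>\<omega>. (X \<omega>)\<^sup>2)"
    using gamma_distributed_moment(1)[OF assms, of 1] gamma_distributed_moment(1)[OF assms, of 2]
    by simp_all
qed

lemma (in prob_space) variance_mult_gamma_product: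
  assumes "0 < k" "0 < m"
    and X: "distributed M lborel X (\<lambda>x. ennreal (gamma_density k x))"
    and Y: "distributed M lborel Y (\<lambda>x. ennreal (gamma_density m x))"
    and indep: "indep_var borel X borel Y"
  shows "variance (\<lambda>\<omega>. g * X \<omega> * Y \<omega>) = g\<^sup>2 * ((k + 1) * (m + 1) / (k * m) - 1)"
proof -
  note mX = gamma_distributed_mean_second_moment[OF assms(1) X]
  note mY = gamma_distributed_mean_second_moment[OF assms(2) Y]
  have indep2: "indep_var borel (\<lambda>\<omega>. (X \<omega>)\<^sup>2) borel (\<lambda>\<omega>. (Y \<omega>)\<^sup>2)"
    using indep_var_compose[OF indep, of "\<lambda>x. x\<^sup>2" borel "\<lambda>x. x\<^sup>2" borel] by (simp add: o_def)
  have "integrable M (\<lambda>\<omega>. X \<omega> * Y \<omega>)" "expectation (\<lambda>\<omega>. X \<omega> * Y \<omega>) = 1"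
    using indep_var_integrable[OF indep mX(1) mY(1)]
      indep_var_lebesgue_integral[OF indep mX(1) mY(1)] mX(2) mY(2) by auto
  then have int1: "integrable M (\<lambda>\<omega>. g * X \<omega> * Y \<omega>)"
    and E1: "expectation (\<lambda>\<omega>. g * X \<omega> * Y \<omega>) = g"
    by (simp_all add: mult.assoc)
  have "integrable M (\<lambda>\<omega>. (X \<omega>)\<^sup>2 * (Y \<omega>)\<^sup>2)"
    "expectation (\<lambda>\<omega>. (X \<omega>)\<^sup>2 * (Y \<omega>)\<^sup>2) = (k + 1) / k * ((m + 1) / m)"
    using indep_var_integrable[OF indep2 mX(3) mY(3)]
      indep_var_lebesgue_integral[OF indep2 mX(3) mY(3)] mX(4) mY(4) by auto
  then have int2: "integrable M (\<lambda>\<omega>. (g * X \<omega> * Y \<omega>)\<^sup>2)"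
    and E2: "expectation (\<lambda>\<omega>. (g * X \<omega> * Y \<omega>)\<^sup>2) = g\<^sup>2 * ((k + 1) / k * ((m + 1) / m))"
    by (simp_all add: power_mult_distrib mult.assoc)
  have "variance (\<lambda>\<omega>. g * X \<omega> * Y \<omega>) =
      expectation (\<lambda>\<omega>. (g * X \<omega> * Y \<omega>)\<^sup>2) - (expectation (\<lambda>\<omega>. g * X \<omega> * Y \<omega>))\<^sup>2"
    by (rule variance_eq[OF int1 int2])
  also have "\<dots> = g\<^sup>2 * ((k + 1) / k * ((m + 1) / m)) - g\<^sup>2"
    by (simp only: E1 E2)
  also have "\<dots> = g\<^sup>2 * ((k + 1) * (m + 1) / (k * m) - 1)"
    by (simp add: field_simps)
  finally show ?thesis .
qed

theorem theorem1:
  fixes M :: "'s measure" and X Y :: "'s \<Rightarrow> real"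
    and Rs lam kd md gd ke me ge sigma2 :: real
  assumes "Rs > 0" and "lam = 2 powr Rs"
    and "kd > 0" and "md > 0" and "gd > 0"
    and "ke > 0" and "me > 0" and "ge > 0"
    and "prob_space M"
    and "distributed M lborel X (\<lambda>x. ennreal (gamma_density ke x))"
    and "distributed M lborel Y (\<lambda>x. ennreal (gamma_density me x))"
    and "prob_space.indep_var M borel X borel Y"
    and "sigma2 = prob_space.variance M (\<lambda>\<omega>. ge * X \<omega> * Y \<omega>)"
  shows "(let P = (\<lambda>x. genK_cdf kd md gd (lam - 1 + lam * x))
          in P ge + sigma2 / 2 * deriv (deriv P) ge) =
     meijerG 2 1 [1] [kd, md, 0] (kd * md * (lam - 1 + lam * ge) / gd) / (Gamma kd * Gamma md)
     + ge\<^sup>2 * lam\<^sup>2 *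
       (((ke + 1) * (me + 1) / (ke * me) - 1) *
         meijerG 2 2 [0, 1] [kd, md, 0, 2] (kd * md * (lam - 1 + lam * ge) / gd))
       / (2 * Gamma kd * Gamma md * (lam - 1 + lam * ge)\<^sup>2)"
proof -
  have "0 < lam - 1 + lam * ge"
    using assms(1,2,8) by (simp add: add_pos_pos)
  have sigma2: "sigma2 = ge\<^sup>2 * ((ke + 1) * (me + 1) / (ke * me) - 1)"
    using prob_space.variance_mult_gamma_product[OF assms(9,6,7,10,11,12)] assms(13) by simp
  show ?thesis
    unfolding Let_def deriv_deriv_genK_cdf_affine[OF assms(3-5) \<open>0 < lam - 1 + lam * ge\<close>]
    unfolding sigma2 genK_cdf_def
    using assms(3,4) \<open>0 < lam - 1 + lam * ge\<close> by (simp add: field_simps)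
qed

end
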